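(* Consider a discrete-time control system $\mathbf{x}_{k+1}=f(\mathbf{x}_k,\mathbf{u}_k)$ with state $\mathbf{x}_k\in\mathcal{X}\subset\mathbb{R}^n$, control $\mathbf{u}_k\in\mathcal{U}\subset\mathbb{R}^m$, and $f$ locally Lipschitz. Let $h:\mathcal{X}\times\mathcal{O}\to\mathbb{R}$ be a continuous function of the robot state and the obstacle state, let $h_k:=h(\mathbf{x}_k,\hat{\mathbf{x}}^o_k)$ where $\hat{\mathbf{x}}^o_k$ is the (deterministic) estimated obstacle state at time $k$, and let $h_{k+1}:=h(\mathbf{x}_{k+1},\mathbf{x}^o_{k+1})$, which is a random variable because the next obstacle state $\mathbf{x}^o_{k+1}$ is random. Let $\mathcal{S}=\{\mathbf{x}_k\in\mathcal{X}: h(\mathbf{x}_k,\hat{\mathbf{x}}^o_k)\ge 0\}$. Fix $\beta_u\in(0,1)$ and $\gamma\in(0,1]$. For $\beta\in(0,1)$ let $\mathcal{U}^k_\beta=\{\mathbf{u}_k\in\mathcal{U}:\operatorname{CVaR}^k_\beta(h_{k+1})\ge(1-\gamma)h_k\}$, and define the adaptive risk level $\beta_k:=\min\{\beta\in(0,\beta_u]:\mathcal{U}^k_\beta\neq\emptyset\}$. Suppose $h$ is a risk adaptive CVaR barrier function, i.e., for each $\mathbf{x}_k\in\mathbb{R}^n$ there exists $\mathbf{u}_k\in\mathbb{R}^m$ such that $\operatorname{CVaR}^k_{\beta_k}(h_{k+1})\ge(1-\gamma)h_k$. Then $\mathcal{S}$ is at least CVaR-safe with respect to the risk level $\beta_u$,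 i.e., the solutions of the system starting at $\mathbf{x}_0\in\mathcal{S}$ satisfy $\operatorname{CVaR}^{0:k}_{\beta_u}(h_k)\ge 0$ for all $k\ge 0$.
   Context: For a real random variable $Z$ and $\beta\in(0,1)$: $\operatorname{VaR}_\beta(Z)=\sup\{\zeta\in\mathbb{R}:\mathbb{P}(Z\ge\zeta)\ge 1-\beta\}$ and $\operatorname{CVaR}_\beta(Z)=\mathbb{E}[Z\mid Z\le \operatorname{VaR}_\beta(Z)]$, equivalently $\operatorname{CVaR}_\beta(Z)=-\inf_{\zeta\in\mathbb{R}}\mathbb{E}[\zeta+(-Z-\zeta)_+/\beta]$ with $(\cdot)_+=\max\{\cdot,0\}$. $\operatorname{CVaR}^k_\beta$ denotes this CVaR operator applied at time step $k$ (conditional on the information at time $k$), and the cumulative (dynamic) risk measure is the composition $\operatorname{CVaR}^{0:k}_\beta:=\operatorname{CVaR}^0_\beta\circ\operatorname{CVaR}^1_\beta\circ\cdots\circ\operatorname{CVaR}^k_\beta$. The solutions of the system starting at $\mathbf{x}_0\in\mathcal{S}$ are called CVaR-safe (at risk level $\beta$) if $\operatorname{CVaR}^{0:k}_\beta(h_k)\ge 0$ for all $k\ge0$. *)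

theory Defs
  imports "HOL-Probability.Probability"
begin

text \<open>The expectation of the
  nonnegative part is taken as a nonnegative Lebesgue integral and values are extended reals,
  so that the operator is total; for integrable Z it agrees with the usual real value.\<close>
definition cvar :: "real \<Rightarrow> 'a measure \<Rightarrow> ('a \<Rightarrow> ereal) \<Rightarrow> ereal" where
  "cvar \<beta> M Z =
     - (INF \<zeta>::real. ereal \<zeta> +
          enn2ereal (\<integral>\<^sup>+ x. e2ennreal (- Z x - ereal \<zeta>) \<partial>M) / ereal \<beta>)"

text \<open>Histories: the list of realized obstacle states o_k, ..., o_1 (most recent first);
  the initial obstacle state o_0 and robot state x_0 are fixed parameters.\<close>
fun traj :: "('x \<Rightarrow> 'u \<Rightarrow> 'x) \<Rightarrow> ('o list \<Rightarrow> 'u) \<Rightarrow> 'x \<Rightarrow> 'o list \<Rightarrow> 'x" where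
  "traj f \<pi> x0 [] = x0"
| "traj f \<pi> x0 (ob # H) = f (traj f \<pi> x0 H) (\<pi> H)"

definition cur_obs :: "'o \<Rightarrow> 'o list \<Rightarrow> 'o" where
  "cur_obs o0 H = hd (H @ [o0])"

text \<open>Nested (dynamic) CVaR: n conditional CVaR operators, the outermost at the given history
  H, the next obstacle state at history H being distributed according to K H.\<close>
fun ncvar :: "real \<Rightarrow> ('o list \<Rightarrow> 'o measure) \<Rightarrow> nat \<Rightarrow> ('o list \<Rightarrow> ereal) \<Rightarrow> 'o list \<Rightarrow> ereal" where
  "ncvar \<beta> K 0 g H = g H"
| "ncvar \<beta> K (Suc n) g H = cvar \<beta> (K H) (\<lambda>ob. ncvar \<beta> K n g (ob # H))"

text \<open>The set U^k_beta for current robot state x, current obstacle estimate oh and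
  distribution M of the next obstacle state.\<close>
definition Uset :: "'u set \<Rightarrow> ('x \<Rightarrow> 'u \<Rightarrow> 'x) \<Rightarrow> ('x \<Rightarrow> 'o \<Rightarrow> real) \<Rightarrow> real \<Rightarrow>
    'o measure \<Rightarrow> 'x \<Rightarrow> 'o \<Rightarrow> real \<Rightarrow> 'u set" where
  "Uset U f h \<gamma> M x oh \<beta> =
     {u \<in> U. cvar \<beta> M (\<lambda>ob. ereal (h (f x u) ob)) \<ge> ereal ((1 - \<gamma>) * h x oh)}"

definition beta_adapt :: "real \<Rightarrow> (real \<Rightarrow> 'u set) \<Rightarrow> real" where
  "beta_adapt \<beta>u Us = (LEAST \<beta>. \<beta> \<in> {0<..\<beta>u} \<and> Us \<beta> \<noteq> {})"

definition beta_min_exists :: "real \<Rightarrow> (real \<Rightarrow> 'u set) \<Rightarrow> bool" where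
  "beta_min_exists \<beta>u Us \<longleftrightarrow>
     (\<exists>\<beta>. \<beta> \<in> {0<..\<beta>u} \<and> Us \<beta> \<noteq> {} \<and> (\<forall>\<beta>'\<in>{0<..\<beta>u}. Us \<beta>' \<noteq> {} \<longrightarrow> \<beta> \<le> \<beta>'))"

end

theory Submission
  imports Defs
begin

(* Along the closed loop the chosen control satisfies the CVaR barrier condition at the
   adaptive level beta_k <= beta_u, and CVaR is nondecreasing in the level, so it also holds
   at beta_u: CVaR_{beta_u}(h_{k+1}) >= (1 - gamma) h_k.  CVaR is monotone and positively
   homogeneous, so composing these one-step bounds gives
   CVaR^{0:k}_{beta_u}(h_k) >= (1 - gamma)^k h_0 >= 0. *)

lemma nn_integral_cmult_ge: "(c::ennreal) * integral\<^sup>N M f \<le> (\<integral>\<^sup>+x. c * f x \<partial>M)"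
proof -
  have "c * integral\<^sup>N M f = (SUP g \<in> {g. simple_function M g \<and> g \<le> f}. c * integral\<^sup>S M g)"
    unfolding nn_integral_def by (rule SUP_mult_left_ennreal)
  also have "\<dots> \<le> (\<integral>\<^sup>+x. c * f x \<partial>M)"
  proof (rule SUP_least)
    fix g assume g: "g \<in> {g. simple_function M g \<and> g \<le> f}"
    then have "c * integral\<^sup>S M g = integral\<^sup>S M (\<lambda>x. c * g x)" by simp
    also have "\<dots> \<le> (\<integral>\<^sup>+x. c * f x \<partial>M)"
      unfolding nn_integral_def
      by (rule SUP_upper) (use g in \<open>auto simp: le_fun_def intro: mult_left_mono\<close>)
    finally show "c * integral\<^sup>S M g \<le> (\<integral>\<^sup>+x. c * f x \<partial>M)" .
  qed
  finally show ?thesis .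
qed

lemma e2ennreal_cmult:
  assumes "(c::real) > 0"
  shows "e2ennreal (ereal c * a) = ennreal c * e2ennreal a"
proof (cases a)
  case (real r)
  show ?thesis
  proof (cases "r \<ge> 0")
    case True then show ?thesis using assms real by (simp add: ennreal_mult)
  next
    case False
    then have "c * r \<le> 0" using assms by (simp add: mult_nonneg_nonpos)
    then show ?thesis using assms real False by (simp add: ennreal_neg)
  qed
qed (use assms in \<open>auto simp: e2ennreal_neg ennreal_mult_top\<close>)

definition cvar_objective :: "real \<Rightarrow> 'a measure \<Rightarrow> ('a \<Rightarrow> ereal) \<Rightarrow> real \<Rightarrow> ereal" where
  "cvar_objective \<beta> M Z \<zeta> =
     ereal \<zeta> + enn2ereal (\<integral>\<^sup>+ x. e2ennreal (- Z x - ereal \<zeta>) \<partial>M) / ereal \<beta>"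

lemma cvar_eq_INF_objective: "cvar \<beta> M Z = - (INF \<zeta>. cvar_objective \<beta> M Z \<zeta>)"
  unfolding cvar_def cvar_objective_def ..

lemma cvar_objective_cmult_ge:
  assumes c: "(c::real) > 0" and \<beta>: "\<beta> > 0"
  shows "ereal c * cvar_objective \<beta> M Z \<zeta> \<le> cvar_objective \<beta> M (\<lambda>x. ereal c * Z x) (c * \<zeta>)"
proof -
  let ?I = "\<integral>\<^sup>+ x. e2ennreal (- Z x - ereal \<zeta>) \<partial>M"
  have "- (ereal c * Z x) - ereal (c * \<zeta>) = ereal c * (- Z x - ereal \<zeta>)" for x
    using c by (cases "Z x") (auto simp: algebra_simps)
  then have "(\<integral>\<^sup>+ x. e2ennreal (- (ereal c * Z x) - ereal (c * \<zeta>)) \<partial>M)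
      = (\<integral>\<^sup>+ x. ennreal c * e2ennreal (- Z x - ereal \<zeta>) \<partial>M)"
    using c by (simp add: e2ennreal_cmult)
  moreover have "ennreal c * ?I \<le> (\<integral>\<^sup>+ x. ennreal c * e2ennreal (- Z x - ereal \<zeta>) \<partial>M)"
    by (rule nn_integral_cmult_ge)
  ultimately have "ereal c * enn2ereal ?I
      \<le> enn2ereal (\<integral>\<^sup>+ x. e2ennreal (- (ereal c * Z x) - ereal (c * \<zeta>)) \<partial>M)"
    using c by (simp add: less_eq_ennreal.rep_eq times_ennreal.rep_eq)
  then have "(ereal c * enn2ereal ?I) / ereal \<beta>
      \<le> enn2ereal (\<integral>\<^sup>+ x. e2ennreal (- (ereal c * Z x) - ereal (c * \<zeta>)) \<partial>M) / ereal \<beta>"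
    using \<beta> by (intro ereal_divide_right_mono) auto
  moreover have "ereal c * cvar_objective \<beta> M Z \<zeta> = ereal (c * \<zeta>) + (ereal c * enn2ereal ?I) / ereal \<beta>"
    unfolding cvar_objective_def using c \<beta>
    by (cases "enn2ereal ?I") (auto simp: algebra_simps)
  ultimately show ?thesis
    unfolding cvar_objective_def by (metis add_left_mono)
qed

lemma cvar_cmult_le:
  assumes c: "(c::real) > 0" and \<beta>: "\<beta> > 0"
  shows "cvar \<beta> M (\<lambda>x. ereal c * Z x) \<le> ereal c * cvar \<beta> M Z"
proof -
  have "ereal c * (INF \<zeta>. cvar_objective \<beta> M Z \<zeta>) \<le> (INF \<zeta>. cvar_objective \<beta> M (\<lambda>x. ereal c * Z x) \<zeta>)"
  proof (rule INF_greatest)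
    fix \<zeta>
    have "ereal c * (INF \<zeta>. cvar_objective \<beta> M Z \<zeta>) \<le> ereal c * cvar_objective \<beta> M Z (\<zeta> / c)"
      using c by (intro ereal_mult_left_mono INF_lower) auto
    also have "\<dots> \<le> cvar_objective \<beta> M (\<lambda>x. ereal c * Z x) \<zeta>"
      using cvar_objective_cmult_ge[OF c \<beta>, of M Z "\<zeta> / c"] c by simp
    finally show "ereal c * (INF \<zeta>. cvar_objective \<beta> M Z \<zeta>) \<le> cvar_objective \<beta> M (\<lambda>x. ereal c * Z x) \<zeta>" .
  qed
  then show ?thesis
    unfolding cvar_eq_INF_objective by (simp add: ereal_mult_minus_right)
qed

lemma cvar_cmult:
  assumes c: "(c::real) > 0" and \<beta>: "\<beta> > 0"
  shows "cvar \<beta> M (\<lambda>x. ereal c * Z x) = ereal c * cvar \<beta> M Z"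
proof (rule antisym)
  show "cvar \<beta> M (\<lambda>x. ereal c * Z x) \<le> ereal c * cvar \<beta> M Z"
    using c \<beta> by (rule cvar_cmult_le)
  have "cvar \<beta> M Z \<le> ereal (1 / c) * cvar \<beta> M (\<lambda>x. ereal c * Z x)"
    using cvar_cmult_le[of "1 / c" \<beta> M "\<lambda>x. ereal c * Z x"] c \<beta>
    by (simp add: mult.assoc[symmetric])
  then have "ereal c * cvar \<beta> M Z \<le> ereal c * (ereal (1 / c) * cvar \<beta> M (\<lambda>x. ereal c * Z x))"
    using c by (intro ereal_mult_left_mono) auto
  then show "ereal c * cvar \<beta> M Z \<le> cvar \<beta> M (\<lambda>x. ereal c * Z x)"
    using c by (simp add: mult.assoc[symmetric])
qed

lemma cvar_zero_nonneg: "0 \<le> cvar \<beta> M (\<lambda>_. 0)"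
proof -
  have "(INF \<zeta>. cvar_objective \<beta> M (\<lambda>_. 0) \<zeta>) \<le> cvar_objective \<beta> M (\<lambda>_. 0) 0"
    by (rule INF_lower) simp
  also have "\<dots> = 0"
    by (simp add: cvar_objective_def zero_ereal_def[symmetric] zero_ennreal.rep_eq)
  finally show ?thesis unfolding cvar_eq_INF_objective by simp
qed

lemma cvar_cmult_nonneg_ge:
  assumes "(c::real) \<ge> 0" "\<beta> > 0"
  shows "ereal c * cvar \<beta> M Z \<le> cvar \<beta> M (\<lambda>x. ereal c * Z x)"
proof (cases "c = 0")
  case True
  then show ?thesis using cvar_zero_nonneg by (simp add: zero_ereal_def[symmetric])
next
  case False
  with assms show ?thesis by (simp add: cvar_cmult)
qed

lemma cvar_mono:
  assumes "\<And>x. Z x \<le> Z' x" "\<beta> > 0"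
  shows "cvar \<beta> M Z \<le> cvar \<beta> M Z'"
proof -
  have "cvar_objective \<beta> M Z' \<zeta> \<le> cvar_objective \<beta> M Z \<zeta>" for \<zeta>
  proof -
    have "(\<integral>\<^sup>+ x. e2ennreal (- Z' x - ereal \<zeta>) \<partial>M) \<le> (\<integral>\<^sup>+ x. e2ennreal (- Z x - ereal \<zeta>) \<partial>M)"
      by (intro nn_integral_mono e2ennreal_mono ereal_minus_mono) (use assms in auto)
    then show ?thesis
      unfolding cvar_objective_def using assms(2)
      by (intro add_left_mono ereal_divide_right_mono) (auto simp: less_eq_ennreal.rep_eq)
  qed
  then show ?thesis
    unfolding cvar_eq_INF_objective ereal_minus_le_minus by (intro INF_mono) blast
qed

lemma cvar_mono_level:
  assumes "0 < \<beta>1" "\<beta>1 \<le> \<beta>2"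
  shows "cvar \<beta>1 M Z \<le> cvar \<beta>2 M Z"
proof -
  have "A / ereal \<beta>2 \<le> A / ereal \<beta>1" if "A \<ge> 0" for A :: ereal
    using that assms by (cases A) (auto intro!: divide_left_mono)
  then have "cvar_objective \<beta>2 M Z \<zeta> \<le> cvar_objective \<beta>1 M Z \<zeta>" for \<zeta>
    unfolding cvar_objective_def by (intro add_left_mono) auto
  then show ?thesis
    unfolding cvar_eq_INF_objective ereal_minus_le_minus by (intro INF_mono) blast
qed

lemma ncvar_ge_geometric:
  assumes \<beta>: "\<beta> > 0" and a: "a \<ge> 0"
    and step: "\<And>H. ereal a * g H \<le> cvar \<beta> (K H) (\<lambda>ob. g (ob # H))"
  shows "ereal (a ^ n) * g H \<le> ncvar \<beta> K n g H"
proof (induction n arbitrary: H)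
  case 0
  then show ?case by simp
next
  case (Suc n)
  have "ereal (a ^ Suc n) * g H = ereal (a ^ n) * (ereal a * g H)"
    by (metis mult.assoc mult.commute power_Suc times_ereal.simps(1))
  also have "\<dots> \<le> ereal (a ^ n) * cvar \<beta> (K H) (\<lambda>ob. g (ob # H))"
    using step a by (intro ereal_mult_left_mono) auto
  also have "\<dots> \<le> cvar \<beta> (K H) (\<lambda>ob. ereal (a ^ n) * g (ob # H))"
    using a \<beta> by (intro cvar_cmult_nonneg_ge) auto
  also have "\<dots> \<le> ncvar \<beta> K (Suc n) g H"
    using Suc.IH \<beta> by (simp add: cvar_mono)
  finally show ?case .
qed

lemma beta_adapt_bounds:
  assumes "beta_min_exists \<beta>u Us"
  shows "0 < beta_adapt \<beta>u Us" "beta_adapt \<beta>u Us \<le> \<beta>u"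
proof -
  obtain \<beta> where \<beta>: "\<beta> \<in> {0<..\<beta>u}" "Us \<beta> \<noteq> {}" "\<forall>\<beta>'\<in>{0<..\<beta>u}. Us \<beta>' \<noteq> {} \<longrightarrow> \<beta> \<le> \<beta>'"
    using assms unfolding beta_min_exists_def by blast
  then have "beta_adapt \<beta>u Us = \<beta>"
    unfolding beta_adapt_def by (intro Least_equality) auto
  with \<beta> show "0 < beta_adapt \<beta>u Us" "beta_adapt \<beta>u Us \<le> \<beta>u" by auto
qed

theorem theorem2:
  fixes f :: "real^'n \<Rightarrow> real^'m \<Rightarrow> real^'n"
    and h :: "real^'n \<Rightarrow> real^'p \<Rightarrow> real"
    and X :: "(real^'n) set" and U :: "(real^'m) set" and Obs :: "(real^'p) set"
    and K :: "(real^'p) list \<Rightarrow> (real^'p) measure"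
    and \<pi> :: "(real^'p) list \<Rightarrow> real^'m"
    and x0 :: "real^'n" and o0 :: "real^'p"
    and \<beta>u \<gamma> :: real
  assumes f_maps: "\<forall>x\<in>X. \<forall>u\<in>U. f x u \<in> X"
    and f_loclip: "\<forall>z\<in>X \<times> U. \<exists>e>0. \<exists>L. lipschitz_on L (cball z e \<inter> (X \<times> U)) (\<lambda>(x, u). f x u)"
    and h_cont: "continuous_on (X \<times> Obs) (\<lambda>(x, ob). h x ob)"
    and K_prob: "\<forall>H. prob_space (K H) \<and> sets (K H) = sets borel"
    and beta_u: "0 < \<beta>u" "\<beta>u < 1"
    and gamma: "0 < \<gamma>" "\<gamma> \<le> 1"
    and beta_k_defined: "\<forall>x H. beta_min_exists \<beta>u (Uset U f h \<gamma> (K H) x (cur_obs o0 H))"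
    and RA_CVaR_BF: "\<forall>x H. \<exists>u.
          cvar (beta_adapt \<beta>u (Uset U f h \<gamma> (K H) x (cur_obs o0 H))) (K H)
               (\<lambda>ob. ereal (h (f x u) ob))
          \<ge> ereal ((1 - \<gamma>) * h x (cur_obs o0 H))"
    and controls: "\<forall>H. \<pi> H \<in> Uset U f h \<gamma> (K H) (traj f \<pi> x0 H) (cur_obs o0 H)
          (beta_adapt \<beta>u (Uset U f h \<gamma> (K H) (traj f \<pi> x0 H) (cur_obs o0 H)))"
    and x0_X: "x0 \<in> X"
    and x0_S: "h x0 o0 \<ge> 0"
  shows "\<forall>k. ncvar \<beta>u K k (\<lambda>H. ereal (h (traj f \<pi> x0 H) (cur_obs o0 H))) [] \<ge> 0"
proof
  fix k
  define g where "g = (\<lambda>H. ereal (h (traj f \<pi> x0 H) (cur_obs o0 H)))"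
  have step: "ereal (1 - \<gamma>) * g H \<le> cvar \<beta>u (K H) (\<lambda>ob. g (ob # H))" for H
  proof -
    let ?Us = "Uset U f h \<gamma> (K H) (traj f \<pi> x0 H) (cur_obs o0 H)"
    have "ereal (1 - \<gamma>) * g H \<le> cvar (beta_adapt \<beta>u ?Us) (K H) (\<lambda>ob. g (ob # H))"
      using controls unfolding Uset_def g_def cur_obs_def by simp
    also have "\<dots> \<le> cvar \<beta>u (K H) (\<lambda>ob. g (ob # H))"
      using beta_adapt_bounds beta_k_defined by (blast intro: cvar_mono_level)
    finally show ?thesis .
  qed
  have "0 \<le> ereal ((1 - \<gamma>) ^ k) * g []"
    unfolding g_def cur_obs_def using x0_S gamma by simp
  also have "\<dots> \<le> ncvar \<beta>u K k g []"
    using beta_u gamma step by (intro ncvar_ge_geometric) auto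
  finally show "0 \<le> ncvar \<beta>u K k (\<lambda>H. ereal (h (traj f \<pi> x0 H) (cur_obs o0 H))) []"
    unfolding g_def .
qed

end
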